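(* Let $P=P(x,y)$ be a quasi-polynomial in two noncommuting variables $x,y$ whose coefficients are polynomials in the entries $x_{ij},y_{ij}$ ($1\le i,j\le 2$). If $P$ is a quasi-identity of $M_2$, then $P$ is a consequence of the Cayley–Hamilton identity, i.e. $P$ lies in the T-ideal generated by $Q_2$.
   Context: $F$ is a field of characteristic $0$, $M_2=M_2(F)$. Quasi-polynomials in $x,y$ are elements of the free algebra on $x,y$ over $F[x_{ij},y_{ij}]$; $P$ is a quasi-identity of $M_2$ if $P(A,B)=0$ for all $A=(a_{ij}),B=(b_{ij})\in M_2$, substituting $A,B$ for $x,y$ and $a_{ij},b_{ij}$ for $x_{ij},y_{ij}$. Let $\xi,\eta$ be the generic matrices $(x_{ij}),(y_{ij})$, and for monomials $\mathrm{tr}(\cdot)$ denote the trace of the corresponding product of generic matrices. $Q_2(x_1,x_2)=x_1x_2+x_2x_1-\mathrm{tr}(x_1)x_2-\mathrm{tr}(x_2)x_1+\mathrm{tr}(x_1)\mathrm{tr}(x_2)-\mathrm{tr}(x_1x_2)$. A T-ideal is an ideal (of the quasi-polynomial algebra in arbitrarily many variables) closed under simultaneous substitutions of variables $x_k\mapsto H_k$ and of their entry-variables $x^{(k)}_{ij}\mapsto$ the $(i,j)$-entry of the matrix obtained from $H_k$ by replacing variables with generic matrices. *)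

theory Defs
  imports "HOL-Analysis.Analysis" "HOL-Library.Poly_Mapping"
begin

datatype word = Word (letters: "nat list")

instantiation word :: monoid_add
begin
definition zero_word :: word where "zero_word = Word []"
definition plus_word :: "word \<Rightarrow> word \<Rightarrow> word" where
  "plus_word u v = Word (letters u @ letters v)"
instance by standard (auto simp: zero_word_def plus_word_def)
end

text \<open>Entry variable x^(k)_ij is represented by the triple (k,i,j), i,j in the 2-element type.\<close>
type_synonym evar = "nat \<times> 2 \<times> 2"

type_synonym 'a mpoly = "(evar \<Rightarrow>\<^sub>0 nat) \<Rightarrow>\<^sub>0 'a"

text \<open>Quasi-polynomials: free associative algebra on x_0, x_1, ... over 'a mpoly.\<close>
type_synonym 'a qpoly = "word \<Rightarrow>\<^sub>0 'a mpoly"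

definition pvar :: "evar \<Rightarrow> 'a::comm_ring_1 mpoly" where
  "pvar v = Poly_Mapping.single (Poly_Mapping.single v 1) 1"

definition pconst :: "'a::comm_ring_1 \<Rightarrow> 'a mpoly" where
  "pconst c = Poly_Mapping.single 0 c"

definition peval :: "('a::comm_ring_1 \<Rightarrow> 'b::comm_ring_1) \<Rightarrow> (evar \<Rightarrow> 'b) \<Rightarrow> 'a mpoly \<Rightarrow> 'b" where
  "peval cf val p = (\<Sum>m\<in>Poly_Mapping.keys p. cf (Poly_Mapping.lookup p m) *
      (\<Prod>v\<in>Poly_Mapping.keys (m :: evar \<Rightarrow>\<^sub>0 nat). val v ^ Poly_Mapping.lookup m v))"

definition qvar :: "nat \<Rightarrow> 'a::comm_ring_1 qpoly" where
  "qvar k = Poly_Mapping.single (Word [k]) 1"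

definition qconst :: "'a::comm_ring_1 mpoly \<Rightarrow> 'a qpoly" where
  "qconst c = Poly_Mapping.single (Word []) c"

definition mscal :: "'b::semiring_1 \<Rightarrow> 'b^2^2 \<Rightarrow> 'b^2^2" where
  "mscal c M = (\<chi> i j. c * M $ i $ j)"

definition mword :: "(nat \<Rightarrow> 'b::semiring_1^2^2) \<Rightarrow> word \<Rightarrow> 'b^2^2" where
  "mword A w = foldr (\<lambda>k M. A k ** M) (letters w) (mat 1)"

definition qeval :: "('a::comm_ring_1 mpoly \<Rightarrow> 'b::comm_ring_1) \<Rightarrow> (nat \<Rightarrow> 'b^2^2) \<Rightarrow> 'a qpoly \<Rightarrow> 'b^2^2" where
  "qeval cf A P = (\<Sum>w\<in>Poly_Mapping.keys P. mscal (cf (Poly_Mapping.lookup P w)) (mword A w))"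

definition generic_matrix :: "nat \<Rightarrow> 'a::comm_ring_1 mpoly^2^2" where
  "generic_matrix k = (\<chi> i j. pvar (k, i, j))"

definition generic_eval :: "'a::comm_ring_1 qpoly \<Rightarrow> 'a mpoly^2^2" where
  "generic_eval H = qeval id generic_matrix H"

text \<open>tr(H): trace of H evaluated at generic matrices, as a scalar quasi-polynomial.\<close>
definition qtr :: "'a::comm_ring_1 qpoly \<Rightarrow> 'a qpoly" where
  "qtr H = qconst (trace (generic_eval H))"

definition Q2 :: "'a::comm_ring_1 qpoly \<Rightarrow> 'a qpoly \<Rightarrow> 'a qpoly" where
  "Q2 x1 x2 = x1 * x2 + x2 * x1 - qtr x1 * x2 - qtr x2 * x1 + qtr x1 * qtr x2 - qtr (x1 * x2)"

definition qsubst :: "(nat \<Rightarrow> 'a::comm_ring_1 qpoly) \<Rightarrow> 'a qpoly \<Rightarrow> 'a qpoly" where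
  "qsubst \<sigma> P = (\<Sum>w\<in>Poly_Mapping.keys P.
      qconst (peval pconst (\<lambda>(k, i, j). generic_eval (\<sigma> k) $ i $ j) (Poly_Mapping.lookup P w))
      * prod_list (map \<sigma> (letters w)))"

inductive_set T_ideal :: "'a::comm_ring_1 qpoly set \<Rightarrow> 'a qpoly set" for S where
  gen: "p \<in> S \<Longrightarrow> p \<in> T_ideal S"
| zero: "0 \<in> T_ideal S"
| add: "p \<in> T_ideal S \<Longrightarrow> q \<in> T_ideal S \<Longrightarrow> p + q \<in> T_ideal S"
| mult_left: "p \<in> T_ideal S \<Longrightarrow> a * p \<in> T_ideal S"
| mult_right: "p \<in> T_ideal S \<Longrightarrow> p * a \<in> T_ideal S"
| subst: "p \<in> T_ideal S \<Longrightarrow> qsubst \<sigma> p \<in> T_ideal S"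

text \<open>P is a quasi-polynomial in x = x_0, y = x_1 only (coefficients in x_ij = x^(0)_ij,
  y_ij = x^(1)_ij).\<close>
definition two_var_qpoly :: "'a::comm_ring_1 qpoly \<Rightarrow> bool" where
  "two_var_qpoly P \<longleftrightarrow>
     (\<forall>w\<in>Poly_Mapping.keys P. set (letters w) \<subseteq> {0, 1} \<and>
        (\<forall>m\<in>Poly_Mapping.keys (Poly_Mapping.lookup P w). \<forall>v\<in>Poly_Mapping.keys m. fst v \<le> 1))"

definition assign2 :: "'b^2^2 \<Rightarrow> 'b^2^2 \<Rightarrow> nat \<Rightarrow> 'b^2^2" where
  "assign2 A B k = (if k = 0 then A else B)"

definition quasi_identity_M2 :: "'a::field qpoly \<Rightarrow> bool" where
  "quasi_identity_M2 P \<longleftrightarrow>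
     (\<forall>A B :: 'a^2^2. qeval (peval id (\<lambda>(k, i, j). assign2 A B k $ i $ j)) (assign2 A B) P = 0)"

end

theory Submission
  imports Defs
begin

text \<open>
  Modulo consequences of \<open>Q\<^sub>2\<close> that vanish on \<open>M\<^sub>2\<close>, every two-variable
  quasi-polynomial reduces to a normal form \<open>a + b x + c y + d xy\<close> with scalar
  coefficients: \<open>Q\<^sub>2(z, z)\<close> expresses \<open>z\<^sup>2\<close> through \<open>1, z\<close> (here \<open>char F = 0\<close> is
  used to divide by 2), and \<open>Q\<^sub>2(x, y)\<close> expresses \<open>yx\<close> through \<open>1, x, y, xy\<close>.
  If \<open>P\<close> is a quasi-identity, so is its normal form. For generic \<open>A, B\<close> the matrices
  \<open>1, A, B, AB\<close> are linearly independent, witnessed by a nonzero \<open>3 \<times> 3\<close> determinant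
  \<open>D(A, B)\<close>; hence \<open>D\<close> annihilates all four coefficients, and as \<open>D\<close> is a nonzero
  polynomial over an infinite field, the coefficients vanish as polynomials in the
  entries of \<open>x, y\<close>. Since \<open>P\<close> only involves \<open>x, y\<close>, the substitution collapsing all
  variables onto \<open>x, y\<close> fixes \<open>P\<close> and kills the normal form, so \<open>P\<close> lies in the T-ideal.
\<close>

locale ring_hom =
  fixes h :: "'a::ring_1 \<Rightarrow> 'b::ring_1"
  assumes hom_add: "h (x + y) = h x + h y"
    and hom_mult: "h (x * y) = h x * h y"
    and hom_one: "h 1 = 1"
begin

lemma hom_zero: "h 0 = 0"
  using hom_add[of 0 0] by simp

lemma hom_uminus: "h (- x) = - h x"
  using hom_add[of x "- x"] hom_zero add.inverse_unique[of "h x" "h (- x)"] by simp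

lemma hom_diff: "h (x - y) = h x - h y"
  using hom_add[of x "- y"] hom_uminus[of y] by simp

lemma hom_sum: "h (\<Sum>i\<in>I. f i) = (\<Sum>i\<in>I. h (f i))"
  by (induction I rule: infinite_finite_induct) (auto simp: hom_zero hom_add)

lemma hom_power: "h (x ^ n) = h x ^ n"
  by (induction n) (auto simp: hom_one hom_mult)

end

lemma ring_hom_prod:
  "ring_hom h \<Longrightarrow> h (\<Prod>i\<in>I. f i) = (\<Prod>i\<in>I. h (f i :: 'a::comm_ring_1) :: 'b::comm_ring_1)"
  by (induction I rule: infinite_finite_induct) (auto simp: ring_hom.hom_one ring_hom.hom_mult)

lemma ring_hom_id: "ring_hom id"
  by unfold_locales simp_all

definition pm_sum :: "('k \<Rightarrow> 'v::zero \<Rightarrow> 'c::comm_monoid_add) \<Rightarrow> ('k \<Rightarrow>\<^sub>0 'v) \<Rightarrow> 'c" where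
  "pm_sum T p = (\<Sum>k\<in>Poly_Mapping.keys p. T k (Poly_Mapping.lookup p k))"

lemma pm_sum_superset:
  assumes "\<And>k. T k 0 = 0" "finite S" "Poly_Mapping.keys p \<subseteq> S"
  shows "pm_sum T p = (\<Sum>k\<in>S. T k (Poly_Mapping.lookup p k))"
  unfolding pm_sum_def
  by (rule sum.mono_neutral_left) (use assms in \<open>auto simp: in_keys_iff\<close>)

lemma pm_sum_add:
  assumes "\<And>k. T k 0 = 0" "\<And>k a b. T k (a + b) = T k a + T k b"
  shows "pm_sum T (p + q) = pm_sum T p + pm_sum T (q :: 'k \<Rightarrow>\<^sub>0 'v::monoid_add)"
proof -
  let ?S = "Poly_Mapping.keys p \<union> Poly_Mapping.keys q"
  have "pm_sum T (p + q) = (\<Sum>k\<in>?S. T k (Poly_Mapping.lookup (p + q) k))"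
    by (rule pm_sum_superset) (use assms keys_add[of p q] in auto)
  also have "\<dots> = (\<Sum>k\<in>?S. T k (Poly_Mapping.lookup p k)) + (\<Sum>k\<in>?S. T k (Poly_Mapping.lookup q k))"
    by (simp add: lookup_add assms sum.distrib)
  also have "\<dots> = pm_sum T p + pm_sum T q"
    by (subst (1 2) pm_sum_superset[where S = ?S]) (use assms in auto)
  finally show ?thesis .
qed

lemma pm_sum_zero [simp]: "pm_sum T 0 = 0"
  by (simp add: pm_sum_def)

lemma pm_sum_single:
  assumes "\<And>k. T k 0 = 0"
  shows "pm_sum T (Poly_Mapping.single k c) = T k c"
  by (subst pm_sum_superset[where S = "{k}"]) (use assms in auto)

lemma pm_sum_sum:
  assumes "\<And>k. T k 0 = 0" "\<And>k a b. T k (a + b) = T k a + T k b"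
  shows "pm_sum T (\<Sum>i\<in>I. f i) = (\<Sum>i\<in>I. pm_sum T (f i :: 'k \<Rightarrow>\<^sub>0 'v::comm_monoid_add))"
  by (induction I rule: infinite_finite_induct) (simp_all add: pm_sum_add[OF assms])

lemma poly_mapping_sum_single:
  "p = (\<Sum>k\<in>Poly_Mapping.keys p. Poly_Mapping.single k (Poly_Mapping.lookup p k))"
  by (rule poly_mapping_eqI) (simp add: lookup_sum lookup_single when_def in_keys_iff)

lemma bilinear_sum_left:
  assumes "\<And>x y z. mul (x + y) z = mul x z + mul y z" "\<And>z. mul 0 z = 0"
  shows "mul (\<Sum>i\<in>I. f i) z = (\<Sum>i\<in>I. mul (f i) z)"
  by (induction I rule: infinite_finite_induct) (auto simp: assms)

lemma bilinear_sum_right: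
  assumes "\<And>x y z. mul z (x + y) = mul z x + mul z y" "\<And>z. mul z 0 = 0"
  shows "mul z (\<Sum>i\<in>I. f i) = (\<Sum>i\<in>I. mul z (f i))"
  by (induction I rule: infinite_finite_induct) (auto simp: assms)

lemma pm_sum_mult:
  fixes T :: "'k::monoid_add \<Rightarrow> 'v::semiring_0 \<Rightarrow> 'c::comm_monoid_add"
  assumes T0: "\<And>k. T k 0 = 0" and T_add: "\<And>k a b. T k (a + b) = T k a + T k b"
    and mul_left: "\<And>x y z. mul (x + y) z = mul x z + mul y z" "\<And>z. mul 0 z = 0"
    and mul_right: "\<And>x y z. mul z (x + y) = mul z x + mul z y" "\<And>z. mul z 0 = 0"
    and T_mult: "\<And>k l a b. T (k + l) (a * b) = mul (T k a) (T l b)"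
  shows "pm_sum T (p * q) = mul (pm_sum T p) (pm_sum T q)"
proof -
  let ?K = "Poly_Mapping.keys p" and ?L = "Poly_Mapping.keys q"
  have "p * q = (\<Sum>k\<in>?K. Poly_Mapping.single k (Poly_Mapping.lookup p k)) *
                (\<Sum>l\<in>?L. Poly_Mapping.single l (Poly_Mapping.lookup q l))"
    by (subst (1) poly_mapping_sum_single, subst (2) poly_mapping_sum_single) (rule refl)
  also have "\<dots> = (\<Sum>k\<in>?K. \<Sum>l\<in>?L. Poly_Mapping.single (k + l) (Poly_Mapping.lookup p k * Poly_Mapping.lookup q l))"
    by (simp add: sum_distrib_left sum_distrib_right mult_single) (rule sum.swap)
  finally have pq: "p * q = \<dots>" .
  have "pm_sum T (p * q) = (\<Sum>k\<in>?K. \<Sum>l\<in>?L. T (k + l) (Poly_Mapping.lookup p k * Poly_Mapping.lookup q l))"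
    unfolding pq by (simp add: pm_sum_sum[of T, OF T0 T_add] pm_sum_single[of T, OF T0])
  also have "\<dots> = (\<Sum>k\<in>?K. \<Sum>l\<in>?L. mul (T k (Poly_Mapping.lookup p k)) (T l (Poly_Mapping.lookup q l)))"
    by (simp add: T_mult)
  also have "\<dots> = mul (pm_sum T p) (pm_sum T q)"
    unfolding pm_sum_def
    by (simp add: bilinear_sum_left[of mul, OF mul_left] bilinear_sum_right[of mul, OF mul_right])
      (rule sum.swap)
  finally show ?thesis .
qed

definition monom_eval :: "(evar \<Rightarrow> 'b::comm_ring_1) \<Rightarrow> (evar \<Rightarrow>\<^sub>0 nat) \<Rightarrow> 'b" where
  "monom_eval val m = (\<Prod>v\<in>Poly_Mapping.keys m. val v ^ Poly_Mapping.lookup m v)"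

lemma monom_eval_superset:
  assumes "finite S" "Poly_Mapping.keys m \<subseteq> S"
  shows "monom_eval val m = (\<Prod>v\<in>S. val v ^ Poly_Mapping.lookup m v)"
  unfolding monom_eval_def
  by (rule prod.mono_neutral_left) (use assms in \<open>auto simp: in_keys_iff\<close>)

lemma monom_eval_add: "monom_eval val (m + n) = monom_eval val m * monom_eval val n"
proof -
  let ?S = "Poly_Mapping.keys m \<union> Poly_Mapping.keys n"
  have "monom_eval val (m + n) = (\<Prod>v\<in>?S. val v ^ Poly_Mapping.lookup (m + n) v)"
    by (rule monom_eval_superset) (use keys_add[of m n] in auto)
  also have "\<dots> = (\<Prod>v\<in>?S. val v ^ Poly_Mapping.lookup m v) * (\<Prod>v\<in>?S. val v ^ Poly_Mapping.lookup n v)"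
    by (simp add: lookup_add power_add prod.distrib)
  also have "\<dots> = monom_eval val m * monom_eval val n"
    by (subst (1 2) monom_eval_superset[where S = ?S]) auto
  finally show ?thesis .
qed

lemma monom_eval_zero [simp]: "monom_eval val 0 = 1"
  by (simp add: monom_eval_def)

lemma peval_as_pm_sum: "peval cf val p = pm_sum (\<lambda>m c. cf c * monom_eval val m) p"
  by (simp add: peval_def pm_sum_def monom_eval_def)

context
  fixes cf :: "'a::comm_ring_1 \<Rightarrow> 'b::comm_ring_1"
  assumes cf: "ring_hom cf"
begin

lemma peval_add: "peval cf val (p + q) = peval cf val p + peval cf val q"
  unfolding peval_as_pm_sum
  by (rule pm_sum_add) (simp_all add: ring_hom.hom_zero[OF cf] ring_hom.hom_add[OF cf] distrib_right)

lemma peval_mult: "peval cf val (p * q) = peval cf val p * peval cf val q"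
  unfolding peval_as_pm_sum
  by (rule pm_sum_mult[where mul = "(*)"])
    (auto simp: ring_hom.hom_zero[OF cf] ring_hom.hom_mult[OF cf] ring_hom.hom_add[OF cf]
      distrib_right distrib_left monom_eval_add)

lemma peval_single: "peval cf val (Poly_Mapping.single m c) = cf c * monom_eval val m"
  unfolding peval_as_pm_sum by (rule pm_sum_single) (simp add: ring_hom.hom_zero[OF cf])

lemma ring_hom_peval: "ring_hom (peval cf val)"
proof
  show "peval cf val 1 = 1"
    using peval_single[of val 0 1] by (simp add: ring_hom.hom_one[OF cf])
qed (simp_all add: peval_add peval_mult)

lemma peval_pvar [simp]: "peval cf val (pvar v) = val v"
  by (simp add: pvar_def peval_single ring_hom.hom_one[OF cf] monom_eval_def)

lemma peval_pconst [simp]: "peval cf val (pconst c) = cf c"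
  by (simp add: pconst_def peval_single)

lemma ring_hom_peval_comp:
  assumes h: "ring_hom h"
  shows "h (peval cf val p) = peval (h \<circ> cf) (h \<circ> val) p"
  by (simp add: peval_def ring_hom.hom_sum[OF h] ring_hom.hom_mult[OF h] ring_hom_prod[OF h]
      ring_hom.hom_power[OF h])

end

lemma ring_hom_pconst: "ring_hom (pconst :: 'a::comm_ring_1 \<Rightarrow> 'a mpoly)"
  by unfold_locales (simp_all add: pconst_def single_add mult_single)

lemma peval_cong:
  assumes "\<forall>m\<in>Poly_Mapping.keys p. \<forall>v\<in>Poly_Mapping.keys m. g v = g' v"
  shows "peval cf g p = peval cf g' p"
  unfolding peval_def using assms by (intro sum.cong refl arg_cong2[where f = "(*)"] prod.cong) auto

lemma pvar_power: "(pvar v :: 'a::comm_ring_1 mpoly) ^ n = Poly_Mapping.single (Poly_Mapping.single v n) 1"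
  by (induction n) (simp_all add: pvar_def mult_single flip: single_add)

lemma single_sum_one:
  "Poly_Mapping.single (\<Sum>v\<in>V. g v) (1::'a::comm_ring_1) = (\<Prod>v\<in>V. Poly_Mapping.single (g v) 1)"
proof (induction V rule: infinite_finite_induct)
  case (insert v V)
  then show ?case by (simp add: mult_single flip: insert.IH)
qed simp_all

lemma monom_eval_pvar: "monom_eval pvar m = Poly_Mapping.single m (1::'a::comm_ring_1)"
proof -
  have "monom_eval pvar m = (\<Prod>v\<in>Poly_Mapping.keys m. Poly_Mapping.single (Poly_Mapping.single v (Poly_Mapping.lookup m v)) (1::'a))"
    by (simp add: monom_eval_def pvar_power)
  also have "\<dots> = Poly_Mapping.single (\<Sum>v\<in>Poly_Mapping.keys m. Poly_Mapping.single v (Poly_Mapping.lookup m v)) 1"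
    by (simp add: single_sum_one)
  also have "\<dots> = Poly_Mapping.single m 1"
    using poly_mapping_sum_single[of m] by simp
  finally show ?thesis .
qed

lemma peval_pconst_pvar [simp]: "peval pconst pvar p = p"
proof -
  have "peval pconst pvar p = (\<Sum>m\<in>Poly_Mapping.keys p. Poly_Mapping.single m (Poly_Mapping.lookup p m))"
    unfolding peval_def monom_eval_def[symmetric] monom_eval_pvar
    by (rule sum.cong) (simp_all add: pconst_def mult_single)
  then show ?thesis using poly_mapping_sum_single[of p] by simp
qed


subsection \<open>Identity principle over a field of characteristic zero\<close>

lemma sum_powers_vanish_imp_coeffs_zero:
  fixes e :: "nat \<Rightarrow> 'a::field_char_0"
  assumes "finite N" "\<And>t. (\<Sum>n\<in>N. e n * t ^ n) = 0"
  shows "\<forall>n\<in>N. e n = 0"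
proof -
  define p where "p = (\<Sum>n\<in>N. monom (e n) n)"
  have "\<forall>t. poly p t = 0"
    using assms(2) by (simp add: p_def poly_sum poly_monom)
  then have "p = 0"
    using poly_all_0_iff_0 by blast
  moreover have "coeff p n = (if n \<in> N then e n else 0)" for n
    using assms(1) by (simp add: p_def coeff_sum)
  ultimately show ?thesis by (metis coeff_0)
qed

lemma monom_eval_split_var:
  "monom_eval val m = monom_eval val (Poly_Mapping.update v 0 m) * val v ^ Poly_Mapping.lookup m v"
proof -
  have keys: "Poly_Mapping.keys (Poly_Mapping.update v 0 m) = Poly_Mapping.keys m - {v}"
    by (simp add: keys_update)
  have rest: "monom_eval val (Poly_Mapping.update v 0 m) = (\<Prod>u\<in>Poly_Mapping.keys m - {v}. val u ^ Poly_Mapping.lookup m u)"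
    unfolding monom_eval_def keys by (rule prod.cong) (auto simp: lookup_update)
  show ?thesis
  proof (cases "v \<in> Poly_Mapping.keys m")
    case True
    then show ?thesis unfolding rest by (simp add: monom_eval_def prod.remove mult.commute)
  next
    case False
    then show ?thesis unfolding rest by (simp add: monom_eval_def in_keys_iff)
  qed
qed

lemma monom_eval_fun_upd:
  "v \<notin> Poly_Mapping.keys m \<Longrightarrow> monom_eval (val(v := t)) m = monom_eval val m"
  unfolding monom_eval_def by (rule prod.cong) auto

text \<open>Induction on the set of variables: grouping the monomials by their degree in one
  variable \<open>v\<close> turns the hypothesis into a vanishing polynomial in \<open>val v\<close>.\<close>
lemma monom_combination_vanishes_imp_zero:
  fixes c :: "'i \<Rightarrow> 'a::field_char_0" and \<mu> :: "'i \<Rightarrow> (evar \<Rightarrow>\<^sub>0 nat)"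
  assumes "finite V"
  shows "finite K \<Longrightarrow> inj_on \<mu> K \<Longrightarrow> (\<forall>i\<in>K. Poly_Mapping.keys (\<mu> i) \<subseteq> V) \<Longrightarrow>
    (\<forall>val. (\<Sum>i\<in>K. c i * monom_eval val (\<mu> i)) = 0) \<Longrightarrow> \<forall>i\<in>K. c i = 0"
  using assms
proof (induction V arbitrary: K c \<mu> rule: finite_induct)
  case empty
  have \<mu>_zero: "\<mu> j = 0" if "j \<in> K" for j
    using empty(3) that
    by (metis poly_mapping_eqI lookup_zero not_in_keys_iff_lookup_eq_zero subset_empty empty_iff)
  show ?case
  proof
    fix i assume i: "i \<in> K"
    then have "K = {i}"
      using empty(2) \<mu>_zero by (auto simp: inj_on_def)
    then show "c i = 0" using empty(4) \<mu>_zero[OF i] by simp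
  qed
next
  case (insert v V)
  let ?n = "\<lambda>i. Poly_Mapping.lookup (\<mu> i) v"
  let ?m = "\<lambda>i. Poly_Mapping.update v 0 (\<mu> i)"
  define E where "E n val = (\<Sum>i\<in>{i\<in>K. ?n i = n}. c i * monom_eval val (?m i))" for n val
  have E_indep: "E n (val(v := t)) = E n val" for n val t
    unfolding E_def by (rule sum.cong) (simp_all add: monom_eval_fun_upd keys_update)
  have group: "(\<Sum>i\<in>K. c i * monom_eval val (\<mu> i)) = (\<Sum>n\<in>?n ` K. E n val * val v ^ n)" for val
  proof -
    have "(\<Sum>i\<in>K. c i * monom_eval val (\<mu> i)) =
        (\<Sum>n\<in>?n ` K. \<Sum>i\<in>{i\<in>K. ?n i = n}. c i * monom_eval val (\<mu> i))"
      by (rule sum.image_gen) (rule insert.prems(1))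
    also have "\<dots> = (\<Sum>n\<in>?n ` K. E n val * val v ^ n)"
      unfolding E_def sum_distrib_right
      by (rule sum.cong, simp, rule sum.cong, simp)
        (subst monom_eval_split_var[of _ _ v], simp add: mult.assoc)
    finally show ?thesis .
  qed
  have E_zero: "E n val = 0" if "n \<in> ?n ` K" for n val
  proof -
    have "\<forall>n\<in>?n ` K. E n val = 0"
    proof (rule sum_powers_vanish_imp_coeffs_zero)
      show "finite (?n ` K)" using insert.prems(1) by simp
      fix t
      show "(\<Sum>n\<in>?n ` K. E n val * t ^ n) = 0"
        using insert.prems(4) group[of "val(v := t)"] by (simp add: E_indep)
    qed
    then show ?thesis using that by blast
  qed
  show ?case
  proof
    fix i assume i: "i \<in> K"
    let ?K = "{j\<in>K. ?n j = ?n i}"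
    have "\<forall>j\<in>?K. c j = 0"
    proof (rule insert.IH[where \<mu> = ?m])
      show "finite ?K" using insert.prems(1) by simp
      show "inj_on ?m ?K"
      proof (rule inj_onI)
        fix x y assume xy: "x \<in> ?K" "y \<in> ?K" "?m x = ?m y"
        have "\<mu> x = \<mu> y"
        proof (rule poly_mapping_eqI)
          fix u
          have "Poly_Mapping.lookup (?m x) u = Poly_Mapping.lookup (?m y) u"
            using xy(3) by simp
          then show "Poly_Mapping.lookup (\<mu> x) u = Poly_Mapping.lookup (\<mu> y) u"
            using xy(1,2) by (cases "u = v") (auto simp: lookup_update)
        qed
        then show "x = y" using xy insert.prems(2) by (auto simp: inj_on_def)
      qed
      show "\<forall>j\<in>?K. Poly_Mapping.keys (?m j) \<subseteq> V"
        using insert.prems(3) by (auto simp: keys_update)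
      show "\<forall>val. (\<Sum>j\<in>?K. c j * monom_eval val (?m j)) = 0"
        using E_zero[of "?n i"] i unfolding E_def by auto
    qed
    then show "c i = 0" using i by simp
  qed
qed

lemma mpoly_eq_0_if_peval_vanishes:
  fixes p :: "'a::field_char_0 mpoly"
  assumes "\<And>val. peval id val p = 0"
  shows "p = 0"
proof -
  have "\<forall>m\<in>Poly_Mapping.keys p. Poly_Mapping.lookup p m = 0"
  proof (rule monom_combination_vanishes_imp_zero[where \<mu> = id
        and V = "\<Union>m\<in>Poly_Mapping.keys p. Poly_Mapping.keys m"])
    show "\<forall>val. (\<Sum>m\<in>Poly_Mapping.keys p. Poly_Mapping.lookup p m * monom_eval val (id m)) = 0"
      using assms by (simp add: peval_def monom_eval_def)
  qed auto
  then show ?thesis by (metis in_keys_iff poly_mapping_eqI lookup_zero)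
qed

text \<open>Restricting to the line through \<open>val\<^sub>0\<close> and \<open>g\<close> reduces to univariate polynomials,
  which form a domain.\<close>
lemma mpoly_eq_0_if_mult_vanishes:
  fixes p q :: "'a::field_char_0 mpoly"
  assumes vanish: "\<And>val. peval id val q * peval id val p = 0" and q_g: "peval id g q \<noteq> 0"
  shows "p = 0"
proof (rule mpoly_eq_0_if_peval_vanishes)
  fix val\<^sub>0 :: "evar \<Rightarrow> 'a"
  define line where "line t v = val\<^sub>0 v + t * (g v - val\<^sub>0 v)" for t v
  define L where "L = peval (\<lambda>c. [:c:]) (\<lambda>v. [:val\<^sub>0 v, g v - val\<^sub>0 v:])"
  have hom_const: "ring_hom (\<lambda>c::'a. [:c:])"
    by unfold_locales simp_all
  have hom_poly: "ring_hom (\<lambda>p. poly p t)" for t :: 'a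
    by unfold_locales simp_all
  have poly_L: "poly (L r) t = peval id (line t) r" for r t
  proof -
    have "poly (L r) t = peval ((\<lambda>p. poly p t) \<circ> (\<lambda>c. [:c:])) ((\<lambda>p. poly p t) \<circ> (\<lambda>v. [:val\<^sub>0 v, g v - val\<^sub>0 v:])) r"
      unfolding L_def by (rule ring_hom_peval_comp[OF hom_const hom_poly])
    also have "(\<lambda>p. poly p t) \<circ> (\<lambda>v. [:val\<^sub>0 v, g v - val\<^sub>0 v:]) = line t"
      by (simp add: fun_eq_iff line_def)
    finally show ?thesis by (simp add: comp_def id_def)
  qed
  have "poly (L q * L p) t = 0" for t
    using vanish[of "line t"] by (simp add: poly_L)
  then have "L q * L p = 0"
    using poly_all_0_iff_0 by blast
  moreover have "L q \<noteq> 0"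
  proof
    assume "L q = 0"
    then have "peval id (line 1) q = 0" using poly_L[of q 1] by simp
    moreover have "line 1 = g" by (simp add: fun_eq_iff line_def)
    ultimately show False using q_g by simp
  qed
  ultimately have "L p = 0" by simp
  then have "peval id (line 0) p = 0" using poly_L[of p 0] by simp
  moreover have "line 0 = val\<^sub>0" by (simp add: fun_eq_iff line_def)
  ultimately show "peval id val\<^sub>0 p = 0" by simp
qed

lemma matrix2_eq_iff: "(M :: 'b^2^2) = N \<longleftrightarrow> (\<forall>i j. M $ i $ j = N $ i $ j)"
  by (simp add: vec_eq_iff)

lemma matrix2_mult_entry:
  "((M :: 'b::semiring_1^2^2) ** N) $ i $ j = M $ i $ 1 * N $ 1 $ j + M $ i $ 2 * N $ 2 $ j"
  by (simp add: matrix_matrix_mult_def sum_2)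

lemma matrix_add_rdistrib: "((A :: 'b::semiring_1^'n^'m) + B) ** C = A ** C + B ** C"
  by (vector matrix_matrix_mult_def sum.distrib[symmetric] field_simps)

lemma mscal_entry [simp]: "mscal c M $ i $ j = c * M $ i $ j"
  by (simp add: mscal_def)

lemma mscal_add: "mscal (a + b) (M::'b::semiring_1^2^2) = mscal a M + mscal b M"
  by (simp add: matrix2_eq_iff algebra_simps)

lemma mscal_zero [simp]: "mscal 0 (M::'b::semiring_1^2^2) = 0"
  by (simp add: matrix2_eq_iff)

lemma mscal_one [simp]: "mscal 1 (M::'b::semiring_1^2^2) = M"
  by (simp add: matrix2_eq_iff)

lemma mscal_mult: "mscal a (M::'b::comm_semiring_1^2^2) ** mscal b N = mscal (a * b) (M ** N)"
  by (simp add: matrix2_eq_iff matrix2_mult_entry algebra_simps)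

lemma mscal_mat1_mult: "mscal c (mat 1) ** (M :: 'b::comm_ring_1^2^2) = mscal c M"
  by (simp add: matrix2_eq_iff forall_2 matrix2_mult_entry mat_def)

lemma letters_plus [simp]: "letters (u + v) = letters u @ letters v"
  by (simp add: plus_word_def)

lemma letters_zero [simp]: "letters 0 = []"
  by (simp add: zero_word_def)

lemma Word_Nil_eq_zero: "Word [] = 0"
  by (simp add: zero_word_def)

lemma mword_Cons: "mword A (Word (k # l)) = A k ** mword A (Word l)"
  by (simp add: mword_def)

lemma mword_Nil [simp]: "mword A (Word []) = mat 1"
  by (simp add: mword_def)

lemma mword_zero [simp]: "mword A 0 = mat 1"
  by (simp add: mword_def)

lemma mword_add: "mword A (u + v) = mword A u ** mword A v"
proof -
  have "foldr (\<lambda>k M. A k ** M) (l\<^sub>1 @ l\<^sub>2) (mat 1) =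
      foldr (\<lambda>k M. A k ** M) l\<^sub>1 (mat 1) ** foldr (\<lambda>k M. A k ** M) l\<^sub>2 (mat 1)" for l\<^sub>1 l\<^sub>2
    by (induction l\<^sub>1) (simp_all add: matrix_mul_assoc)
  then show ?thesis by (simp add: mword_def)
qed

lemma qeval_as_pm_sum: "qeval cf A P = pm_sum (\<lambda>w c. mscal (cf c) (mword A w)) P"
  by (simp add: qeval_def pm_sum_def)

context
  fixes cf :: "'a::comm_ring_1 mpoly \<Rightarrow> 'b::comm_ring_1"
  assumes cf: "ring_hom cf"
begin

lemma qeval_add: "qeval cf A (P + Q) = qeval cf A P + qeval cf A Q"
  unfolding qeval_as_pm_sum
  by (rule pm_sum_add) (simp_all add: ring_hom.hom_zero[OF cf] ring_hom.hom_add[OF cf] mscal_add)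

lemma qeval_mult: "qeval cf A (P * Q) = qeval cf A P ** qeval cf A Q"
  unfolding qeval_as_pm_sum
  by (rule pm_sum_mult[where mul = "(**)"])
    (simp_all add: ring_hom.hom_zero[OF cf] ring_hom.hom_add[OF cf] ring_hom.hom_mult[OF cf]
      mscal_add mscal_mult mword_add matrix_add_ldistrib matrix_add_rdistrib)

lemma qeval_single: "qeval cf A (Poly_Mapping.single w c) = mscal (cf c) (mword A w)"
  unfolding qeval_as_pm_sum by (rule pm_sum_single) (simp add: ring_hom.hom_zero[OF cf])

lemma qeval_diff: "qeval cf A (P - Q) = qeval cf A P - qeval cf A Q"
  using qeval_add[of A "P - Q" Q] by (simp add: eq_diff_eq)

lemma qeval_zero [simp]: "qeval cf A 0 = 0"
  by (simp add: qeval_def)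

lemma qeval_sum: "qeval cf A (\<Sum>i\<in>I. f i) = (\<Sum>i\<in>I. qeval cf A (f i))"
  by (induction I rule: infinite_finite_induct) (simp_all add: qeval_add)

lemma qeval_qvar [simp]: "qeval cf A (qvar k) = A k"
  by (simp add: qvar_def qeval_single ring_hom.hom_one[OF cf] mword_Cons)

lemma qeval_qconst [simp]: "qeval cf A (qconst c) = mscal (cf c) (mat 1)"
  by (simp add: qconst_def qeval_single)

lemma qeval_one [simp]: "qeval cf A 1 = mat 1"
  using qeval_single[of A 0 1] by (simp add: ring_hom.hom_one[OF cf])

lemma qeval_prod_list: "qeval cf A (prod_list (map \<sigma> l)) = mword (qeval cf A \<circ> \<sigma>) (Word l)"
  by (induction l) (simp_all add: qeval_mult mword_Cons)

end

lemma generic_eval_qvar: "generic_eval (qvar k) = generic_matrix k"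
  by (simp add: generic_eval_def qeval_qvar[OF ring_hom_id])

lemma map_matrix_mult:
  "ring_hom h \<Longrightarrow> map_matrix h ((M :: 'a::comm_ring_1^2^2) ** (N :: 'a^2^2)) = map_matrix h M ** map_matrix h N"
  by (simp add: matrix2_eq_iff matrix2_mult_entry ring_hom.hom_add ring_hom.hom_mult)

lemma map_matrix_sum:
  assumes h: "ring_hom h"
  shows "map_matrix h (\<Sum>i\<in>I. (f i :: 'a::comm_ring_1^2^2)) = (\<Sum>i\<in>I. (map_matrix h (f i) :: 'b::comm_ring_1^2^2))"
proof (induction I rule: infinite_finite_induct)
  case (insert x F)
  then show ?case by (simp add: matrix2_eq_iff ring_hom.hom_add[OF h])
qed (simp_all add: matrix2_eq_iff ring_hom.hom_zero[OF h])

lemma map_matrix_mscal: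
  "ring_hom h \<Longrightarrow> map_matrix h (mscal c (M :: 'a::comm_ring_1^2^2)) = mscal (h c) (map_matrix h M)"
  by (simp add: matrix2_eq_iff ring_hom.hom_mult)

lemma map_matrix_mat1:
  "ring_hom h \<Longrightarrow> map_matrix h (mat 1 :: 'a::comm_ring_1^2^2) = (mat 1 :: 'b::comm_ring_1^2^2)"
  by (simp add: matrix2_eq_iff mat_def ring_hom.hom_one ring_hom.hom_zero)

lemma map_matrix_mword:
  fixes A :: "nat \<Rightarrow> 'a::comm_ring_1^2^2" and h :: "'a \<Rightarrow> 'b::comm_ring_1"
  assumes h: "ring_hom h"
  shows "map_matrix h (mword A w) = mword (map_matrix h \<circ> A) w"
proof -
  have "map_matrix h (foldr (\<lambda>k M. A k ** M) l (mat 1)) = foldr (\<lambda>k M. (map_matrix h \<circ> A) k ** M) l (mat 1)" for l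
    by (induction l) (simp_all add: map_matrix_mat1[OF h] map_matrix_mult[OF h])
  then show ?thesis by (simp add: mword_def)
qed

lemma map_matrix_qeval:
  fixes A :: "nat \<Rightarrow> 'a::comm_ring_1^2^2" and h :: "'a \<Rightarrow> 'b::comm_ring_1"
  assumes h: "ring_hom h"
  shows "map_matrix h (qeval cf A H) = qeval (h \<circ> cf) (map_matrix h \<circ> A) H"
  by (simp add: qeval_def map_matrix_sum[OF h] map_matrix_mscal[OF h] map_matrix_mword[OF h])

lemma trace_map_matrix: "ring_hom h \<Longrightarrow> h (trace (M :: 'a::comm_ring_1^2^2)) = trace (map_matrix h M)"
  by (simp add: trace_def sum_2 ring_hom.hom_add)

lemma map_matrix_generic_matrix:
  "map_matrix (peval id val) (generic_matrix k) = (\<chi> i j. val (k, i, j))"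
  by (simp add: matrix2_eq_iff generic_matrix_def peval_pvar[OF ring_hom_id])

lemma qconst_add: "qconst (a + b) = qconst a + qconst (b :: 'a::comm_ring_1 mpoly)"
  by (simp add: qconst_def single_add)

lemma qconst_mult: "qconst (a * b) = qconst a * qconst (b :: 'a::comm_ring_1 mpoly)"
  by (simp add: qconst_def mult_single Word_Nil_eq_zero)

lemma qconst_zero [simp]: "qconst 0 = (0 :: 'a::comm_ring_1 qpoly)"
  by (simp add: qconst_def)

lemma qconst_one [simp]: "qconst 1 = (1 :: 'a::comm_ring_1 qpoly)"
  by (simp add: qconst_def Word_Nil_eq_zero)

lemma ring_hom_qconst: "ring_hom (qconst :: 'a::comm_ring_1 mpoly \<Rightarrow> 'a qpoly)"
  by unfold_locales (simp_all add: qconst_add qconst_mult)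

lemma qconst_uminus: "qconst (- a) = - qconst (a :: 'a::comm_ring_1 mpoly)"
  by (rule ring_hom.hom_uminus[OF ring_hom_qconst])

lemma qconst_diff: "qconst (a - b) = qconst a - qconst (b :: 'a::comm_ring_1 mpoly)"
  by (rule ring_hom.hom_diff[OF ring_hom_qconst])

lemma qconst_commute: "qconst c * P = P * qconst (c :: 'a::comm_ring_1 mpoly)"
proof -
  have "qconst c * Poly_Mapping.single w d = Poly_Mapping.single w d * qconst c" for w d
    by (simp add: qconst_def mult_single Word_Nil_eq_zero mult.commute)
  then show ?thesis
    by (subst (1 2) poly_mapping_sum_single) (simp add: sum_distrib_left sum_distrib_right)
qed

lemma qvar_mult_qconst: "qvar k * qconst c = qconst c * (qvar k :: 'a::comm_ring_1 qpoly)"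
  by (rule qconst_commute[symmetric])

lemma mult_qconst_left_commute: "p * (qconst c * q) = qconst c * (p * (q :: 'a::comm_ring_1 qpoly))"
  by (simp only: mult.assoc[symmetric] qconst_commute[of c p])

definition subst_entries :: "(nat \<Rightarrow> 'a::comm_ring_1 qpoly) \<Rightarrow> evar \<Rightarrow> 'a mpoly" where
  "subst_entries \<sigma> = (\<lambda>(k, i, j). generic_eval (\<sigma> k) $ i $ j)"

definition subst_coeff :: "(nat \<Rightarrow> 'a::comm_ring_1 qpoly) \<Rightarrow> 'a mpoly \<Rightarrow> 'a mpoly" where
  "subst_coeff \<sigma> = peval pconst (subst_entries \<sigma>)"

lemma ring_hom_subst_coeff: "ring_hom (subst_coeff \<sigma>)"
  unfolding subst_coeff_def by (rule ring_hom_peval[OF ring_hom_pconst])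

lemma qsubst_as_pm_sum:
  "qsubst \<sigma> P = pm_sum (\<lambda>w c. qconst (subst_coeff \<sigma> c) * prod_list (map \<sigma> (letters w))) P"
  by (simp add: qsubst_def pm_sum_def subst_coeff_def subst_entries_def)

lemma qsubst_add: "qsubst \<sigma> (P + Q) = qsubst \<sigma> P + qsubst \<sigma> Q"
  unfolding qsubst_as_pm_sum
  by (rule pm_sum_add)
    (simp_all add: ring_hom.hom_zero[OF ring_hom_subst_coeff] ring_hom.hom_add[OF ring_hom_subst_coeff]
      qconst_add distrib_right)

lemma qsubst_mult: "qsubst \<sigma> (P * Q) = qsubst \<sigma> P * qsubst \<sigma> Q"
  unfolding qsubst_as_pm_sum
proof (rule pm_sum_mult[where mul = "(*)"])
  fix k l and a b :: "'a::comm_ring_1 mpoly"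
  let ?w = "\<lambda>w. prod_list (map \<sigma> (letters w))"
  have "qconst (subst_coeff \<sigma> (a * b)) * ?w (k + l) =
      qconst (subst_coeff \<sigma> a) * (qconst (subst_coeff \<sigma> b) * ?w k) * ?w l"
    by (simp add: ring_hom.hom_mult[OF ring_hom_subst_coeff] qconst_mult mult.assoc)
  also have "\<dots> = qconst (subst_coeff \<sigma> a) * (?w k * qconst (subst_coeff \<sigma> b)) * ?w l"
    by (simp add: qconst_commute)
  finally show "qconst (subst_coeff \<sigma> (a * b)) * ?w (k + l) =
      qconst (subst_coeff \<sigma> a) * ?w k * (qconst (subst_coeff \<sigma> b) * ?w l)"
    by (simp add: mult.assoc)
qed (simp_all add: ring_hom.hom_zero[OF ring_hom_subst_coeff] ring_hom.hom_add[OF ring_hom_subst_coeff]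
    qconst_add distrib_right distrib_left)

lemma qsubst_single:
  "qsubst \<sigma> (Poly_Mapping.single w c) = qconst (subst_coeff \<sigma> c) * prod_list (map \<sigma> (letters w))"
  unfolding qsubst_as_pm_sum by (rule pm_sum_single) (simp add: ring_hom.hom_zero[OF ring_hom_subst_coeff])

lemma qsubst_qvar [simp]: "qsubst \<sigma> (qvar k) = \<sigma> k"
  by (simp add: qvar_def qsubst_single ring_hom.hom_one[OF ring_hom_subst_coeff])

lemma qsubst_qconst [simp]: "qsubst \<sigma> (qconst c) = qconst (subst_coeff \<sigma> c)"
  by (simp add: qconst_def qsubst_single)

lemma ring_hom_qsubst: "ring_hom (qsubst \<sigma>)"
proof
  show "qsubst \<sigma> 1 = 1"
    using qsubst_qconst[of \<sigma> 1] by (simp add: ring_hom.hom_one[OF ring_hom_subst_coeff])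
qed (simp_all add: qsubst_add qsubst_mult)

lemma generic_eval_qsubst:
  "generic_eval (qsubst \<sigma> H) = qeval (subst_coeff \<sigma>) (generic_eval \<circ> \<sigma>) H"
proof -
  have "generic_eval (qsubst \<sigma> H) = (\<Sum>w\<in>Poly_Mapping.keys H.
      generic_eval (qconst (subst_coeff \<sigma> (Poly_Mapping.lookup H w)) * prod_list (map \<sigma> (letters w))))"
    by (simp add: qsubst_def subst_coeff_def subst_entries_def generic_eval_def qeval_sum[OF ring_hom_id])
  also have "\<dots> = qeval (subst_coeff \<sigma>) (generic_eval \<circ> \<sigma>) H"
    unfolding qeval_def[of "subst_coeff \<sigma>"]
    by (rule sum.cong)
      (simp_all add: generic_eval_def[abs_def] qeval_mult[OF ring_hom_id] qeval_prod_list[OF ring_hom_id]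
        qeval_qconst[OF ring_hom_id] mscal_mat1_mult)
  finally show ?thesis .
qed

text \<open>This is why \<open>qsubst\<close> maps the entry variables of \<open>x\<^sub>k\<close> to the entries of
  \<open>generic_eval (\<sigma> k)\<close>.\<close>
lemma qsubst_qtr: "qsubst \<sigma> (qtr H) = qtr (qsubst \<sigma> H)"
proof -
  have generic: "map_matrix (subst_coeff \<sigma>) \<circ> generic_matrix = generic_eval \<circ> \<sigma>"
    by (simp add: fun_eq_iff matrix2_eq_iff generic_matrix_def subst_coeff_def
        peval_pvar[OF ring_hom_pconst] subst_entries_def)
  have "subst_coeff \<sigma> (trace (generic_eval H)) = trace (map_matrix (subst_coeff \<sigma>) (generic_eval H))"
    by (rule trace_map_matrix[OF ring_hom_subst_coeff])
  also have "\<dots> = trace (qeval (subst_coeff \<sigma> \<circ> id) (map_matrix (subst_coeff \<sigma>) \<circ> generic_matrix) H)"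
    unfolding generic_eval_def by (simp add: map_matrix_qeval[OF ring_hom_subst_coeff])
  also have "\<dots> = trace (generic_eval (qsubst \<sigma> H))"
    by (simp add: generic generic_eval_qsubst)
  finally show ?thesis by (simp add: qtr_def)
qed

lemma qsubst_Q2: "qsubst \<sigma> (Q2 a b) = Q2 (qsubst \<sigma> a) (qsubst \<sigma> b)"
  by (simp add: Q2_def ring_hom.hom_diff[OF ring_hom_qsubst] ring_hom.hom_add[OF ring_hom_qsubst]
      ring_hom.hom_mult[OF ring_hom_qsubst] qsubst_qtr)

lemma Q2_subst_mem_T_ideal:
  fixes \<sigma> :: "nat \<Rightarrow> 'a::comm_ring_1 qpoly"
  shows "Q2 (\<sigma> 0) (\<sigma> 1) \<in> T_ideal {Q2 (qvar 0) (qvar 1)}"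
proof -
  have "qsubst \<sigma> (Q2 (qvar 0) (qvar 1)) \<in> T_ideal {Q2 (qvar 0) (qvar 1)}"
    by (rule T_ideal.subst[OF T_ideal.gen]) simp
  then show ?thesis by (simp add: qsubst_Q2)
qed

definition pair_entries :: "'b^2^2 \<Rightarrow> 'b^2^2 \<Rightarrow> evar \<Rightarrow> 'b" where
  "pair_entries A B = (\<lambda>(k, i, j). assign2 A B k $ i $ j)"

definition eval_pair :: "'b::field^2^2 \<Rightarrow> 'b^2^2 \<Rightarrow> 'b qpoly \<Rightarrow> 'b^2^2" where
  "eval_pair A B = qeval (peval id (pair_entries A B)) (assign2 A B)"

lemma quasi_identity_M2_iff: "quasi_identity_M2 P \<longleftrightarrow> (\<forall>A B. eval_pair A B P = 0)"
  by (simp add: quasi_identity_M2_def eval_pair_def pair_entries_def)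

lemma ring_hom_peval_pair: "ring_hom (peval id (pair_entries A B))"
  by (rule ring_hom_peval[OF ring_hom_id])

lemma eval_pair_add: "eval_pair A B (P + Q) = eval_pair A B P + eval_pair A B Q"
  unfolding eval_pair_def by (rule qeval_add[OF ring_hom_peval_pair])

lemma eval_pair_diff: "eval_pair A B (P - Q) = eval_pair A B P - eval_pair A B Q"
  unfolding eval_pair_def by (rule qeval_diff[OF ring_hom_peval_pair])

lemma eval_pair_mult: "eval_pair A B (P * Q) = eval_pair A B P ** eval_pair A B Q"
  unfolding eval_pair_def by (rule qeval_mult[OF ring_hom_peval_pair])

lemma eval_pair_zero [simp]: "eval_pair A B 0 = 0"
  unfolding eval_pair_def by (rule qeval_zero[OF ring_hom_peval_pair])

lemma eval_pair_qvar [simp]: "eval_pair A B (qvar 0) = A" "eval_pair A B (qvar (Suc 0)) = B"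
  unfolding eval_pair_def by (simp_all add: qeval_qvar[OF ring_hom_peval_pair] assign2_def)

lemma eval_pair_qconst: "eval_pair A B (qconst c) = mscal (peval id (pair_entries A B) c) (mat 1)"
  unfolding eval_pair_def by (rule qeval_qconst[OF ring_hom_peval_pair])

lemma eval_pair_qtr: "eval_pair A B (qtr H) = mscal (trace (eval_pair A B H)) (mat 1)"
proof -
  have "map_matrix (peval id (pair_entries A B)) \<circ> generic_matrix = assign2 A B"
    by (simp add: fun_eq_iff matrix2_eq_iff generic_matrix_def peval_pvar[OF ring_hom_id] pair_entries_def)
  then have "peval id (pair_entries A B) (trace (generic_eval H)) = trace (eval_pair A B H)"
    unfolding generic_eval_def eval_pair_def
    by (simp add: trace_map_matrix[OF ring_hom_peval_pair] map_matrix_qeval[OF ring_hom_peval_pair])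
  then show ?thesis by (simp add: qtr_def eval_pair_qconst)
qed

lemma Cayley_Hamilton_2_polarized:
  fixes M N :: "'b::comm_ring_1^2^2"
  shows "M ** N + N ** M - mscal (trace M) (mat 1) ** N - mscal (trace N) (mat 1) ** M
     + mscal (trace M) (mat 1) ** mscal (trace N) (mat 1) - mscal (trace (M ** N)) (mat 1) = 0"
  by (simp add: matrix2_eq_iff forall_2 matrix2_mult_entry mat_def trace_def sum_2 algebra_simps)

lemma eval_pair_Q2: "eval_pair A B (Q2 H\<^sub>1 H\<^sub>2) = 0"
  unfolding Q2_def
  by (simp add: eval_pair_add eval_pair_diff eval_pair_mult eval_pair_qtr Cayley_Hamilton_2_polarized)

section \<open>Reduction to the normal form \<open>a + b x + c y + d xy\<close>\<close>

text \<open>Vanishing on \<open>M\<^sub>2\<close> is recorded alongside membership in the T-ideal, which spares us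
  proving that the whole T-ideal consists of quasi-identities.\<close>
definition vanishing_consequence :: "'a::field_char_0 qpoly \<Rightarrow> bool" where
  "vanishing_consequence p \<longleftrightarrow>
     p \<in> T_ideal {Q2 (qvar 0) (qvar 1)} \<and> (\<forall>A B. eval_pair A B p = 0)"

lemma vanishing_consequence_zero: "vanishing_consequence 0"
  by (simp add: vanishing_consequence_def T_ideal.zero)

lemma vanishing_consequence_add:
  "vanishing_consequence p \<Longrightarrow> vanishing_consequence q \<Longrightarrow> vanishing_consequence (p + q)"
  by (simp add: vanishing_consequence_def T_ideal.add eval_pair_add)

lemma vanishing_consequence_mult_left: "vanishing_consequence p \<Longrightarrow> vanishing_consequence (a * p)"
  by (simp add: vanishing_consequence_def T_ideal.mult_left eval_pair_mult)

lemma vanishing_consequence_mult_right: "vanishing_consequence p \<Longrightarrow> vanishing_consequence (p * a)"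
  by (simp add: vanishing_consequence_def T_ideal.mult_right eval_pair_mult)

lemma vanishing_consequence_Q2:
  fixes \<sigma> :: "nat \<Rightarrow> 'a::field_char_0 qpoly"
  shows "vanishing_consequence (Q2 (\<sigma> 0) (\<sigma> 1))"
  using Q2_subst_mem_T_ideal[of \<sigma>] by (simp add: vanishing_consequence_def eval_pair_Q2)

definition normal_form :: "'a::field_char_0 mpoly \<Rightarrow> 'a mpoly \<Rightarrow> 'a mpoly \<Rightarrow> 'a mpoly \<Rightarrow> 'a qpoly" where
  "normal_form a b c d = qconst a + qconst b * qvar 0 + qconst c * qvar 1 + qconst d * (qvar 0 * qvar 1)"

definition reducible :: "'a::field_char_0 qpoly \<Rightarrow> bool" where
  "reducible p \<longleftrightarrow> (\<exists>a b c d. vanishing_consequence (p - normal_form a b c d))"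

lemma reducible_normal_form: "reducible (normal_form a b c d)"
  unfolding reducible_def using vanishing_consequence_zero
  by (intro exI[of _ a] exI[of _ b] exI[of _ c] exI[of _ d]) simp

lemma reducible_normal_form_terms:
  "reducible (qconst a :: 'a::field_char_0 qpoly)" "reducible (qconst a * qvar 0 :: 'a qpoly)"
  "reducible (qconst a * qvar 1 :: 'a qpoly)" "reducible (qvar 0 * qvar 1 :: 'a qpoly)"
  using reducible_normal_form[of a 0 0 0] reducible_normal_form[of 0 a 0 0]
    reducible_normal_form[of 0 0 a 0] reducible_normal_form[of 0 0 0 1]
  by (simp_all add: normal_form_def)

lemma reducible_if_consequence_diff:
  assumes "vanishing_consequence (p - q)" "reducible q"
  shows "reducible p"
proof -
  obtain a b c d where "vanishing_consequence (q - normal_form a b c d)"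
    using assms(2) unfolding reducible_def by blast
  with assms(1) have "vanishing_consequence ((p - q) + (q - normal_form a b c d))"
    by (rule vanishing_consequence_add)
  then show ?thesis unfolding reducible_def by auto
qed

lemma reducible_if_consequence_diff_normal_form:
  "vanishing_consequence (p - normal_form a b c d) \<Longrightarrow> reducible p"
  using reducible_if_consequence_diff reducible_normal_form by blast

lemma reducible_add: "reducible p \<Longrightarrow> reducible q \<Longrightarrow> reducible (p + q)"
proof -
  assume "reducible p" "reducible q"
  then obtain a b c d a' b' c' d' where
    "vanishing_consequence (p - normal_form a b c d)" "vanishing_consequence (q - normal_form a' b' c' d')"
    unfolding reducible_def by blast
  then have "vanishing_consequence ((p - normal_form a b c d) + (q - normal_form a' b' c' d'))"
    by (rule vanishing_consequence_add)
  moreover have "(p - normal_form a b c d) + (q - normal_form a' b' c' d') =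
      (p + q) - normal_form (a + a') (b + b') (c + c') (d + d')"
    by (simp add: normal_form_def qconst_add distrib_right)
  ultimately show ?thesis unfolding reducible_def by metis
qed

lemma reducible_qconst_mult: "reducible p \<Longrightarrow> reducible (qconst e * p)"
proof -
  assume "reducible p"
  then obtain a b c d where "vanishing_consequence (p - normal_form a b c d)"
    unfolding reducible_def by blast
  then have "vanishing_consequence (qconst e * (p - normal_form a b c d))"
    by (rule vanishing_consequence_mult_left)
  then have "vanishing_consequence (qconst e * p - normal_form (e * a) (e * b) (e * c) (e * d))"
    by (simp add: normal_form_def qconst_mult right_diff_distrib distrib_left mult.assoc)
  then show ?thesis unfolding reducible_def by blast
qed

lemma reducible_sum: "(\<And>i. i \<in> I \<Longrightarrow> reducible (f i)) \<Longrightarrow> reducible (\<Sum>i\<in>I. f i)"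
  by (induction I rule: infinite_finite_induct)
    (auto intro: reducible_add reducible_normal_form_terms(1)[of 0, simplified])

text \<open>\<open>Q\<^sub>2(z, z) = 2 z\<^sup>2 - 2 tr(z) z + tr(z)\<^sup>2 - tr(z\<^sup>2)\<close>; dividing by 2 needs characteristic zero.\<close>
lemma square_reduction:
  fixes z :: "'a::field_char_0 qpoly"
  obtains a b where "vanishing_consequence (z * z - (qconst a + qconst b * z))"
proof -
  define t where "t = trace (generic_eval z)"
  define t2 where "t2 = trace (generic_eval (z * z))"
  define r where "r = qconst (t2 - t * t) + qconst (t + t) * z"
  define half :: "'a mpoly" where "half = pconst (1/2)"
  have "qconst half + qconst half = qconst (pconst (1/2 + 1/2) :: 'a mpoly)"
    by (simp only: half_def qconst_add ring_hom.hom_add[OF ring_hom_pconst])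
  then have half_half: "qconst half + qconst half = (1 :: 'a qpoly)"
    by (simp add: ring_hom.hom_one[OF ring_hom_pconst])
  have "z * z + z * z - r = Q2 z z"
    unfolding r_def qconst_diff qconst_mult qconst_add
    by (simp add: Q2_def qtr_def t_def[symmetric] t2_def[symmetric] algebra_simps)
  then have "vanishing_consequence (qconst half * (z * z + z * z - r))"
    using vanishing_consequence_Q2[of "\<lambda>_. z"] by (simp add: vanishing_consequence_mult_left)
  moreover have "qconst half * (z * z + z * z - r) = z * z - (qconst (half * (t2 - t * t)) + qconst (half * (t + t)) * z)"
  proof -
    have "qconst half * (z * z + z * z) = (qconst half + qconst half) * (z * z)"
      by (simp only: distrib_left distrib_right)
    then show ?thesis
      by (simp add: half_half r_def right_diff_distrib distrib_left mult.assoc qconst_mult qconst_diff)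
  qed
  ultimately show ?thesis using that by metis
qed

lemma reducible_xx: "reducible (qvar 0 * qvar 0 :: 'a::field_char_0 qpoly)"
proof -
  obtain a b where "vanishing_consequence (qvar 0 * qvar 0 - (qconst a + qconst b * qvar 0) :: 'a qpoly)"
    by (rule square_reduction)
  then show ?thesis
    by (intro reducible_if_consequence_diff_normal_form[of _ a b 0 0]) (simp add: normal_form_def)
qed

lemma reducible_yy: "reducible (qvar 1 * qvar 1 :: 'a::field_char_0 qpoly)"
proof -
  obtain a c where "vanishing_consequence (qvar 1 * qvar 1 - (qconst a + qconst c * qvar 1) :: 'a qpoly)"
    by (rule square_reduction)
  then show ?thesis
    by (intro reducible_if_consequence_diff_normal_form[of _ a 0 c 0]) (simp add: normal_form_def)
qed

lemma yx_reduction: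
  obtains a b c d where "vanishing_consequence (qvar 1 * qvar 0 - normal_form a b c d :: 'a::field_char_0 qpoly)"
proof -
  let ?x = "qvar 0 :: 'a qpoly" and ?y = "qvar 1 :: 'a qpoly"
  let ?tx = "trace (generic_eval ?x)" and ?ty = "trace (generic_eval ?y)"
    and ?txy = "trace (generic_eval (?x * ?y))"
  have "?y * ?x - normal_form (?txy - ?tx * ?ty) ?ty ?tx (- 1) = Q2 ?x ?y"
    by (simp add: Q2_def qtr_def normal_form_def qconst_add qconst_diff qconst_mult qconst_uminus
        algebra_simps)
  then show ?thesis
    using vanishing_consequence_Q2[of qvar] that by metis
qed

lemma reducible_yx: "reducible (qvar 1 * qvar 0 :: 'a::field_char_0 qpoly)"
  using yx_reduction reducible_if_consequence_diff_normal_form by metis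

lemma reducible_xxy: "reducible (qvar 0 * qvar 0 * qvar 1 :: 'a::field_char_0 qpoly)"
proof -
  obtain a b where "vanishing_consequence (qvar 0 * qvar 0 - (qconst a + qconst b * qvar 0) :: 'a qpoly)"
    by (rule square_reduction)
  then have "vanishing_consequence ((qvar 0 * qvar 0 - (qconst a + qconst b * qvar 0)) * qvar 1 :: 'a qpoly)"
    by (rule vanishing_consequence_mult_right)
  then show ?thesis
    by (intro reducible_if_consequence_diff_normal_form[of _ 0 0 a b])
      (simp add: normal_form_def left_diff_distrib distrib_right mult.assoc)
qed

lemma reducible_xyx: "reducible (qvar 0 * (qvar 1 * qvar 0) :: 'a::field_char_0 qpoly)"
proof -
  obtain a b c d where "vanishing_consequence (qvar 1 * qvar 0 - normal_form a b c d :: 'a qpoly)"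
    by (rule yx_reduction)
  then have "vanishing_consequence (qvar 0 * (qvar 1 * qvar 0 - normal_form a b c d) :: 'a qpoly)"
    by (rule vanishing_consequence_mult_left)
  then have "vanishing_consequence (qvar 0 * (qvar 1 * qvar 0) - qvar 0 * normal_form a b c d :: 'a qpoly)"
    by (simp add: right_diff_distrib)
  moreover have "reducible (qvar 0 * normal_form a b c d :: 'a qpoly)"
  proof -
    have "qvar 0 * normal_form a b c d = qconst a * qvar 0 + qconst b * (qvar 0 * qvar 0) +
        qconst c * (qvar 0 * qvar 1) + qconst d * (qvar 0 * qvar 0 * qvar 1 :: 'a qpoly)"
      by (simp add: normal_form_def distrib_left mult_qconst_left_commute qvar_mult_qconst mult.assoc)
    then show ?thesis
      by (metis reducible_add reducible_qconst_mult reducible_normal_form_terms(2,4) reducible_xx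
          reducible_xxy)
  qed
  ultimately show ?thesis by (rule reducible_if_consequence_diff)
qed

lemma reducible_xyy: "reducible (qvar 0 * (qvar 1 * qvar 1) :: 'a::field_char_0 qpoly)"
proof -
  obtain a c where "vanishing_consequence (qvar 1 * qvar 1 - (qconst a + qconst c * qvar 1) :: 'a qpoly)"
    by (rule square_reduction)
  then have "vanishing_consequence (qvar 0 * (qvar 1 * qvar 1 - (qconst a + qconst c * qvar 1)) :: 'a qpoly)"
    by (rule vanishing_consequence_mult_left)
  then show ?thesis
    by (intro reducible_if_consequence_diff_normal_form[of _ 0 a 0 c])
      (simp add: normal_form_def right_diff_distrib distrib_left mult_qconst_left_commute qvar_mult_qconst)
qed

lemma reducible_normal_form_mult_qvar:
  assumes "k \<in> {0, 1}"
  shows "reducible (normal_form a b c d * qvar k :: 'a::field_char_0 qpoly)"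
proof -
  have "reducible (qvar 0 * qvar k :: 'a qpoly)" "reducible (qvar 1 * qvar k :: 'a qpoly)"
    "reducible (qvar 0 * (qvar 1 * qvar k) :: 'a qpoly)"
    using assms reducible_xx reducible_normal_form_terms(4) reducible_yx reducible_yy reducible_xyx
      reducible_xyy
    by auto
  moreover have "reducible (qconst a * qvar k :: 'a qpoly)"
    using assms reducible_normal_form_terms(2,3) by auto
  moreover have "normal_form a b c d * qvar k = qconst a * qvar k + qconst b * (qvar 0 * qvar k) +
      qconst c * (qvar 1 * qvar k) + qconst d * (qvar 0 * (qvar 1 * qvar k) :: 'a qpoly)"
    by (simp add: normal_form_def distrib_right mult.assoc)
  ultimately show ?thesis
    by (metis reducible_add reducible_qconst_mult)
qed

lemma reducible_mult_qvar:
  assumes "reducible (p :: 'a::field_char_0 qpoly)" "k \<in> {0, 1}"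
  shows "reducible (p * qvar k)"
proof -
  obtain a b c d where "vanishing_consequence (p - normal_form a b c d)"
    using assms(1) unfolding reducible_def by blast
  then have "vanishing_consequence ((p - normal_form a b c d) * qvar k)"
    by (rule vanishing_consequence_mult_right)
  then have "vanishing_consequence (p * qvar k - normal_form a b c d * qvar k)"
    by (simp add: left_diff_distrib)
  then show ?thesis
    using reducible_if_consequence_diff reducible_normal_form_mult_qvar[OF assms(2)] by blast
qed

lemma reducible_word:
  "set l \<subseteq> {0, 1} \<Longrightarrow> reducible (Poly_Mapping.single (Word l) (1 :: 'a::field_char_0 mpoly))"
proof (induction l rule: rev_induct)
  case Nil
  then show ?case
    using reducible_normal_form_terms(1)[of 1] by (simp add: Word_Nil_eq_zero)
next
  case (snoc k l)
  have "Poly_Mapping.single (Word (l @ [k])) (1 :: 'a mpoly) = Poly_Mapping.single (Word l) 1 * qvar k"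
    by (simp add: qvar_def mult_single plus_word_def)
  with snoc show ?case by (simp add: reducible_mult_qvar)
qed

lemma reducible_two_var_qpoly:
  assumes "two_var_qpoly (P :: 'a::field_char_0 qpoly)"
  shows "reducible P"
proof -
  have "P = (\<Sum>w\<in>Poly_Mapping.keys P. qconst (Poly_Mapping.lookup P w) * Poly_Mapping.single (Word (letters w)) 1)"
    by (subst poly_mapping_sum_single, rule sum.cong) (simp_all add: qconst_def mult_single Word_Nil_eq_zero)
  also have "reducible \<dots>"
    using assms unfolding two_var_qpoly_def
    by (intro reducible_sum reducible_qconst_mult reducible_word) auto
  finally show ?thesis .
qed

section \<open>Generic linear independence of \<open>1, A, B, AB\<close>\<close>

definition det3 :: "'b::comm_ring_1 \<Rightarrow> 'b \<Rightarrow> 'b \<Rightarrow> 'b \<Rightarrow> 'b \<Rightarrow> 'b \<Rightarrow> 'b \<Rightarrow> 'b \<Rightarrow> 'b \<Rightarrow> 'b" where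
  "det3 m11 m12 m13 m21 m22 m23 m31 m32 m33 =
     m11 * (m22 * m33 - m23 * m32) - m12 * (m21 * m33 - m23 * m31) + m13 * (m21 * m32 - m22 * m31)"

text \<open>Cramer's rule: each product is a combination of the three equations with cofactors as
  coefficients.\<close>
lemma det3_mult_homogeneous_solution:
  fixes m11 m12 m13 m21 m22 m23 m31 m32 m33 u v w :: "'b::comm_ring_1"
  assumes e1: "m11 * u + m12 * v + m13 * w = 0"
      and e2: "m21 * u + m22 * v + m23 * w = 0"
      and e3: "m31 * u + m32 * v + m33 * w = 0"
  shows "det3 m11 m12 m13 m21 m22 m23 m31 m32 m33 * u = 0 \<and>
         det3 m11 m12 m13 m21 m22 m23 m31 m32 m33 * v = 0 \<and>
         det3 m11 m12 m13 m21 m22 m23 m31 m32 m33 * w = 0"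
proof -
  let ?E1 = "m11 * u + m12 * v + m13 * w" and ?E2 = "m21 * u + m22 * v + m23 * w"
    and ?E3 = "m31 * u + m32 * v + m33 * w"
  have "det3 m11 m12 m13 m21 m22 m23 m31 m32 m33 * u =
    (m22 * m33 - m23 * m32) * ?E1 + (m13 * m32 - m12 * m33) * ?E2 + (m12 * m23 - m13 * m22) * ?E3"
    by (simp add: det3_def algebra_simps)
  moreover have "det3 m11 m12 m13 m21 m22 m23 m31 m32 m33 * v =
    (m23 * m31 - m21 * m33) * ?E1 + (m11 * m33 - m13 * m31) * ?E2 + (m13 * m21 - m11 * m23) * ?E3"
    by (simp add: det3_def algebra_simps)
  moreover have "det3 m11 m12 m13 m21 m22 m23 m31 m32 m33 * w =
    (m21 * m32 - m22 * m31) * ?E1 + (m12 * m31 - m11 * m32) * ?E2 + (m11 * m22 - m12 * m21) * ?E3"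
    by (simp add: det3_def algebra_simps)
  ultimately show ?thesis using e1 e2 e3 by simp
qed

text \<open>The rows are the three linear functionals \<open>M \<mapsto> M\<^sub>1\<^sub>2\<close>, \<open>M \<mapsto> M\<^sub>2\<^sub>1\<close>,
  \<open>M \<mapsto> M\<^sub>1\<^sub>1 - M\<^sub>2\<^sub>2\<close>, which all vanish on the identity matrix.\<close>
definition independence_det :: "'b::comm_ring_1^2^2 \<Rightarrow> 'b^2^2 \<Rightarrow> 'b" where
  "independence_det A B = det3 (A$1$2) (B$1$2) ((A ** B)$1$2) (A$2$1) (B$2$1) ((A ** B)$2$1)
      (A$1$1 - A$2$2) (B$1$1 - B$2$2) ((A ** B)$1$1 - (A ** B)$2$2)"

lemma ring_hom_independence_det:
  fixes A B :: "'a::comm_ring_1^2^2" and h :: "'a \<Rightarrow> 'b::comm_ring_1"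
  assumes h: "ring_hom h"
  shows "h (independence_det A B) = independence_det (map_matrix h A) (map_matrix h B)"
  unfolding independence_det_def det3_def map_matrix_mult[OF h, symmetric]
  by (simp add: ring_hom.hom_add[OF h] ring_hom.hom_diff[OF h] ring_hom.hom_mult[OF h])

lemma independence_det_annihilates:
  fixes A B :: "'b::comm_ring_1^2^2"
  assumes "mscal a (mat 1) + mscal b A + mscal c B + mscal d (A ** B) = 0"
  shows "independence_det A B * a = 0 \<and> independence_det A B * b = 0 \<and>
    independence_det A B * c = 0 \<and> independence_det A B * d = 0"
proof -
  let ?C = "A ** B" and ?D = "independence_det A B"
  have entry: "(mscal a (mat 1) + mscal b A + mscal c B + mscal d ?C) $ i $ j = 0" for i j
    using assms by simp
  have e12: "A$1$2 * b + B$1$2 * c + ?C$1$2 * d = 0"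
    using entry[of 1 2] by (simp add: mat_def algebra_simps)
  have e21: "A$2$1 * b + B$2$1 * c + ?C$2$1 * d = 0"
    using entry[of 2 1] by (simp add: mat_def algebra_simps)
  have e11: "a + b * A$1$1 + c * B$1$1 + d * ?C$1$1 = 0"
    using entry[of 1 1] by (simp add: mat_def)
  have e22: "a + b * A$2$2 + c * B$2$2 + d * ?C$2$2 = 0"
    using entry[of 2 2] by (simp add: mat_def)
  have "(A$1$1 - A$2$2) * b + (B$1$1 - B$2$2) * c + (?C$1$1 - ?C$2$2) * d =
      (a + b * A$1$1 + c * B$1$1 + d * ?C$1$1) - (a + b * A$2$2 + c * B$2$2 + d * ?C$2$2)"
    by (simp add: algebra_simps)
  with e11 e22 have e3: "(A$1$1 - A$2$2) * b + (B$1$1 - B$2$2) * c + (?C$1$1 - ?C$2$2) * d = 0"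
    by simp
  have bcd: "?D * b = 0 \<and> ?D * c = 0 \<and> ?D * d = 0"
    unfolding independence_det_def by (rule det3_mult_homogeneous_solution[OF e12 e21 e3])
  have "?D * a = - (?D * b) * A$1$1 - (?D * c) * B$1$1 - (?D * d) * ?C$1$1"
    using arg_cong[OF e11, of "(*) ?D"] by (simp add: algebra_simps eq_neg_iff_add_eq_0)
  with bcd show ?thesis by simp
qed

section \<open>Collapsing all variables onto \<open>x\<close> and \<open>y\<close>\<close>

definition collapse_subst :: "nat \<Rightarrow> 'a::comm_ring_1 qpoly" where
  "collapse_subst k = qvar (min k 1)"

definition entry_matrix :: "(evar \<Rightarrow> 'b) \<Rightarrow> nat \<Rightarrow> 'b^2^2" where
  "entry_matrix val k = (\<chi> i j. val (k, i, j))"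

lemma entry_matrix_pair_entries: "entry_matrix (pair_entries A B) k = assign2 A B k"
  by (simp add: entry_matrix_def pair_entries_def vec_eq_iff)

lemma peval_subst_coeff_collapse:
  "peval id val (subst_coeff collapse_subst x) =
     peval id (pair_entries (entry_matrix val 0) (entry_matrix val 1)) (x :: 'a::comm_ring_1 mpoly)"
proof -
  have "peval id val (subst_coeff collapse_subst x) =
      peval (peval id val \<circ> pconst) (peval id val \<circ> subst_entries collapse_subst) x"
    unfolding subst_coeff_def by (rule ring_hom_peval_comp[OF ring_hom_pconst ring_hom_peval[OF ring_hom_id]])
  also have "peval id val \<circ> pconst = id"
    by (simp add: fun_eq_iff peval_pconst[OF ring_hom_id])
  also have "peval id val \<circ> subst_entries collapse_subst = pair_entries (entry_matrix val 0) (entry_matrix val 1)"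
    by (auto simp: fun_eq_iff subst_entries_def collapse_subst_def generic_eval_qvar generic_matrix_def
        peval_pvar[OF ring_hom_id] pair_entries_def assign2_def entry_matrix_def)
  finally show ?thesis .
qed

lemma qsubst_collapse_normal_form_eq_0:
  fixes a b c d :: "'a::field_char_0 mpoly"
  assumes "\<forall>A B. eval_pair A B (normal_form a b c d) = 0"
  shows "qsubst collapse_subst (normal_form a b c d) = 0"
proof -
  define D :: "'a mpoly" where "D = independence_det (generic_matrix 0) (generic_matrix 1)"
  have peval_D: "peval id val D = independence_det (entry_matrix val 0) (entry_matrix val 1)" for val
    unfolding D_def ring_hom_independence_det[OF ring_hom_peval[OF ring_hom_id]] map_matrix_generic_matrix
      entry_matrix_def ..
  define A\<^sub>0 :: "'a^2^2" where "A\<^sub>0 = (\<chi> i j. if i = 2 \<and> j = 2 then 1 else 0)"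
  define B\<^sub>0 :: "'a^2^2" where "B\<^sub>0 = (\<chi> i j. if i = j then 0 else 1)"
  have D_witness: "peval id (pair_entries A\<^sub>0 B\<^sub>0) D \<noteq> 0"
    by (simp add: peval_D entry_matrix_pair_entries assign2_def independence_det_def det3_def
        matrix2_mult_entry A\<^sub>0_def B\<^sub>0_def)
  have "subst_coeff collapse_subst e = 0" if "e \<in> {a, b, c, d}" for e
  proof (rule mpoly_eq_0_if_mult_vanishes[OF _ D_witness])
    fix val :: "evar \<Rightarrow> 'a"
    let ?A = "entry_matrix val 0" and ?B = "entry_matrix val 1"
    let ?ev = "peval id (pair_entries ?A ?B)"
    have "mscal (?ev a) (mat 1) + mscal (?ev b) ?A + mscal (?ev c) ?B + mscal (?ev d) (?A ** ?B) = 0"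
      using assms[rule_format, of ?A ?B]
      by (simp add: normal_form_def eval_pair_add eval_pair_mult eval_pair_qconst mscal_mat1_mult)
    then have "independence_det ?A ?B * ?ev e = 0"
      using independence_det_annihilates that by blast
    then show "peval id val D * peval id val (subst_coeff collapse_subst e) = 0"
      by (simp add: peval_D peval_subst_coeff_collapse)
  qed
  then show ?thesis
    by (simp add: normal_form_def ring_hom.hom_add[OF ring_hom_qsubst] ring_hom.hom_mult[OF ring_hom_qsubst]
        collapse_subst_def)
qed

lemma prod_list_collapse_subst:
  "set l \<subseteq> {0, 1} \<Longrightarrow> prod_list (map collapse_subst l) = Poly_Mapping.single (Word l) (1 :: 'a::comm_ring_1 mpoly)"
proof (induction l)
  case Nil
  then show ?case by (simp add: Word_Nil_eq_zero)
next
  case (Cons k l)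
  then have "collapse_subst k = (qvar k :: 'a qpoly)"
    by (auto simp: collapse_subst_def)
  with Cons have "prod_list (map collapse_subst (k # l)) = qvar k * Poly_Mapping.single (Word l) (1 :: 'a mpoly)"
    by simp
  also have "\<dots> = Poly_Mapping.single (Word (k # l)) 1"
    by (simp add: qvar_def mult_single plus_word_def)
  finally show ?case .
qed

lemma qsubst_collapse_two_var_qpoly:
  assumes "two_var_qpoly (P :: 'a::comm_ring_1 qpoly)"
  shows "qsubst collapse_subst P = P"
proof -
  have collapse_entries: "subst_entries collapse_subst v = (pvar v :: 'a mpoly)" if "fst v \<le> 1" for v
    using that by (cases v) (auto simp: subst_entries_def collapse_subst_def generic_eval_qvar
        generic_matrix_def min_absorb1)
  have "qconst (subst_coeff collapse_subst (Poly_Mapping.lookup P w)) * prod_list (map collapse_subst (letters w)) =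
      Poly_Mapping.single w (Poly_Mapping.lookup P w)" if w: "w \<in> Poly_Mapping.keys P" for w
  proof -
    have "subst_coeff collapse_subst (Poly_Mapping.lookup P w) = peval pconst pvar (Poly_Mapping.lookup P w)"
      unfolding subst_coeff_def
      by (rule peval_cong) (use assms w collapse_entries in \<open>auto simp: two_var_qpoly_def\<close>)
    moreover have "set (letters w) \<subseteq> {0, 1}"
      using assms w by (simp add: two_var_qpoly_def)
    ultimately show ?thesis
      by (simp add: prod_list_collapse_subst qconst_def mult_single Word_Nil_eq_zero)
  qed
  then have "qsubst collapse_subst P = (\<Sum>w\<in>Poly_Mapping.keys P. Poly_Mapping.single w (Poly_Mapping.lookup P w))"
    unfolding qsubst_def subst_coeff_def subst_entries_def by (rule sum.cong[OF refl])
  then show ?thesis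
    using poly_mapping_sum_single[of P] by simp
qed

theorem mainTheorem17:
  fixes P :: "'a::field_char_0 qpoly"
  assumes "two_var_qpoly P"
    and "quasi_identity_M2 P"
  shows "P \<in> T_ideal {Q2 (qvar 0) (qvar 1)}"
proof -
  obtain a b c d where consequence: "vanishing_consequence (P - normal_form a b c d)"
    using reducible_two_var_qpoly[OF assms(1)] unfolding reducible_def by blast
  have "\<forall>A B. eval_pair A B (normal_form a b c d) = 0"
    using assms(2) consequence
    by (simp add: quasi_identity_M2_iff vanishing_consequence_def eval_pair_diff)
  then have "qsubst collapse_subst (normal_form a b c d) = 0"
    by (rule qsubst_collapse_normal_form_eq_0)
  then have "P = qsubst collapse_subst (P - normal_form a b c d)"
    using qsubst_collapse_two_var_qpoly[OF assms(1)] by (simp add: ring_hom.hom_diff[OF ring_hom_qsubst])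
  also have "\<dots> \<in> T_ideal {Q2 (qvar 0) (qvar 1)}"
    using consequence unfolding vanishing_consequence_def by (blast intro: T_ideal.subst)
  finally show ?thesis .
qed

end
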